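(* Let $G$ be a connected diamond-free CIS graph and let $n\ge 3$. Suppose $G$ has an induced subgraph $H$ with $V(H)=\{h_{i,j}: 1\le i,j\le n\}$ where, for $(i,j)\ne(k,l)$, $h_{i,j}h_{k,l}\in E(H)$ iff $i=k$ or $j=l$ (so $H\cong L(K_{n,n})$). Let $R_i=\{h_{i,j}:1\le j\le n\}$ and $L_j=\{h_{i,j}:1\le i\le n\}$. Then either all $2n$ cliques $R_1,\dots,R_n,L_1,\dots,L_n$ are maximal cliques of $G$, or none of them is a maximal clique of $G$. Moreover, if all of them are maximal cliques of $G$, then $G=H$.
   Context: A clique is strong if it intersects every inclusion-maximal stable set; a graph is CIS if every inclusion-maximal clique is strong. The diamond is $K_4$ minus one edge; diamond-free means no induced diamond. Maximal clique means inclusion-maximal. *)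

theory Defs
  imports Main
begin

definition simple_graph :: "'a set \<Rightarrow> ('a \<Rightarrow> 'a \<Rightarrow> bool) \<Rightarrow> bool" where
  "simple_graph V E \<longleftrightarrow> finite V \<and> (\<forall>x y. E x y \<longrightarrow> x \<in> V \<and> y \<in> V)
     \<and> (\<forall>x y. E x y \<longrightarrow> E y x) \<and> (\<forall>x. \<not> E x x)"

definition connected_graph :: "'a set \<Rightarrow> ('a \<Rightarrow> 'a \<Rightarrow> bool) \<Rightarrow> bool" where
  "connected_graph V E \<longleftrightarrow>
     (\<forall>x\<in>V. \<forall>y\<in>V. (x, y) \<in> {(u, v). u \<in> V \<and> v \<in> V \<and> E u v}\<^sup>*)"

definition is_clique :: "'a set \<Rightarrow> ('a \<Rightarrow> 'a \<Rightarrow> bool) \<Rightarrow> 'a set \<Rightarrow> bool" where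
  "is_clique V E C \<longleftrightarrow> C \<subseteq> V \<and> (\<forall>x\<in>C. \<forall>y\<in>C. x \<noteq> y \<longrightarrow> E x y)"

definition is_stable :: "'a set \<Rightarrow> ('a \<Rightarrow> 'a \<Rightarrow> bool) \<Rightarrow> 'a set \<Rightarrow> bool" where
  "is_stable V E S \<longleftrightarrow> S \<subseteq> V \<and> (\<forall>x\<in>S. \<forall>y\<in>S. x \<noteq> y \<longrightarrow> \<not> E x y)"

definition maximal_clique :: "'a set \<Rightarrow> ('a \<Rightarrow> 'a \<Rightarrow> bool) \<Rightarrow> 'a set \<Rightarrow> bool" where
  "maximal_clique V E C \<longleftrightarrow> is_clique V E C \<and> (\<forall>D. is_clique V E D \<and> C \<subseteq> D \<longrightarrow> D = C)"

definition maximal_stable :: "'a set \<Rightarrow> ('a \<Rightarrow> 'a \<Rightarrow> bool) \<Rightarrow> 'a set \<Rightarrow> bool" where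
  "maximal_stable V E S \<longleftrightarrow> is_stable V E S \<and> (\<forall>T. is_stable V E T \<and> S \<subseteq> T \<longrightarrow> T = S)"

definition strong_clique :: "'a set \<Rightarrow> ('a \<Rightarrow> 'a \<Rightarrow> bool) \<Rightarrow> 'a set \<Rightarrow> bool" where
  "strong_clique V E C \<longleftrightarrow> (\<forall>S. maximal_stable V E S \<longrightarrow> C \<inter> S \<noteq> {})"

definition CIS :: "'a set \<Rightarrow> ('a \<Rightarrow> 'a \<Rightarrow> bool) \<Rightarrow> bool" where
  "CIS V E \<longleftrightarrow> (\<forall>C. maximal_clique V E C \<longrightarrow> strong_clique V E C)"

definition diamond_free :: "'a set \<Rightarrow> ('a \<Rightarrow> 'a \<Rightarrow> bool) \<Rightarrow> bool" where
  "diamond_free V E \<longleftrightarrow> \<not> (\<exists>a\<in>V. \<exists>b\<in>V. \<exists>c\<in>V. \<exists>d\<in>V.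
      distinct [a, b, c, d] \<and> E a b \<and> E a c \<and> E a d \<and> E b c \<and> E b d \<and> \<not> E c d)"

end

theory Submission
  imports Defs "HOL-Combinatorics.Cycles"
begin

text \<open>In a CIS graph no stable set dominates a maximal clique. If a row \<open>R\<^sub>i\<close> is not maximal,
  some vertex x is adjacent to all of it, and diamond-freeness makes x non-adjacent to every other
  cell; x together with a transversal of the cells outside row i and column j is stable and
  dominates the column \<open>L\<^sub>j\<close>, so \<open>L\<^sub>j\<close> is not maximal either, and symmetrically. If all lines
  are maximal, a vertex y outside H adjacent to a cell \<open>h\<^sub>k\<^sub>,\<^sub>l\<close> sees at most one cell of every
  line (diamond-freeness again), so the partial matching of its neighbours can be avoided by a
  transversal; this needs a fixpoint-free permutation of \<open>n - 1 \<ge> 2\<close> indices, whence \<open>n \<ge> 3\<close>.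
  With y it dominates \<open>L\<^sub>l\<close>, a contradiction, so no edge leaves H and connectivity gives G = H.\<close>

lemma simple_graphD:
  assumes "simple_graph V E" "E x y"
  shows "x \<in> V" "y \<in> V" "E y x" "x \<noteq> y"
  using assms unfolding simple_graph_def by metis+

lemma diamond_freeD:
  assumes "diamond_free V E" "simple_graph V E"
    and "E a b" "E a c" "E a d" "E b c" "E b d" "\<not> E c d" "c \<noteq> d"
  shows False
proof -
  have "distinct [a, b, c, d]" and "a \<in> V" "b \<in> V" "c \<in> V" "d \<in> V"
    using assms(3-9) simple_graphD[OF assms(2)] by auto
  then show False using assms(1,3-8) unfolding diamond_free_def by blast
qed

lemma maximal_clique_ex_non_neighbour:
  assumes "simple_graph V E" "maximal_clique V E C" "y \<in> V" "y \<notin> C"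
  obtains p where "p \<in> C" "\<not> E y p"
proof -
  have "\<not> is_clique V E (insert y C)"
    using assms(2,4) unfolding maximal_clique_def by blast
  moreover have "is_clique V E (insert y C)" if "\<forall>p\<in>C. E y p"
    using that assms(2,3) simple_graphD(3)[OF assms(1)]
    unfolding maximal_clique_def is_clique_def by auto
  ultimately show ?thesis using that by blast
qed

lemma not_maximal_clique_ex_complete_vertex:
  assumes "is_clique V E C" "\<not> maximal_clique V E C"
  obtains x where "x \<in> V" "\<forall>c\<in>C. E x c"
proof -
  obtain D where D: "is_clique V E D" "C \<subseteq> D" "D \<noteq> C"
    using assms unfolding maximal_clique_def by auto
  then obtain x where x: "x \<in> D" "x \<notin> C" by blast
  have "\<forall>c\<in>C. E x c"
  proof
    fix c assume "c \<in> C"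
    then show "E x c" using D(1,2) x unfolding is_clique_def by (metis subsetD)
  qed
  moreover have "x \<in> V" using D(1) x(1) unfolding is_clique_def by blast
  ultimately show ?thesis using that by blast
qed

lemma diamond_free_maximal_clique_unique_neighbour:
  assumes "simple_graph V E" "diamond_free V E" "maximal_clique V E C"
    and "y \<in> V" "y \<notin> C" "c1 \<in> C" "c2 \<in> C" "E y c1" "E y c2"
  shows "c1 = c2"
proof (rule ccontr)
  assume "c1 \<noteq> c2"
  have C_edge: "E u v" if "u \<in> C" "v \<in> C" "u \<noteq> v" for u v
    using that assms(3) unfolding maximal_clique_def is_clique_def by blast
  obtain p where p: "p \<in> C" "\<not> E y p"
    using maximal_clique_ex_non_neighbour[OF assms(1,3-5)] by blast
  then have "p \<noteq> c1" "p \<noteq> c2" "y \<noteq> p" using assms(5,8,9) by auto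
  show False
  proof (rule diamond_freeD[OF assms(2,1)])
    show "E c1 c2" "E c1 p" "E c2 p"
      using C_edge \<open>c1 \<noteq> c2\<close> \<open>p \<noteq> c1\<close> \<open>p \<noteq> c2\<close> p(1) assms(6,7) by auto
    show "E c1 y" "E c2 y" using assms(8,9) simple_graphD(3)[OF assms(1)] by auto
  qed (use p(2) \<open>y \<noteq> p\<close> simple_graphD(3)[OF assms(1)] in auto)
qed

lemma ex_maximal_stable_superset:
  assumes "simple_graph V E" "is_stable V E S0"
  obtains S where "maximal_stable V E S" "S0 \<subseteq> S"
proof -
  have "{T. is_stable V E T} \<subseteq> Pow V" by (auto simp: is_stable_def)
  then have "finite {T. is_stable V E T}"
    using assms(1) finite_subset by (auto simp: simple_graph_def)
  then obtain S where S: "S \<in> {T. is_stable V E T}" "S0 \<subseteq> S"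
      "\<forall>T\<in>{T. is_stable V E T}. S \<subseteq> T \<longrightarrow> S = T"
    using finite_has_maximal2 assms(2) by (metis mem_Collect_eq)
  have "maximal_stable V E S"
    using S(1,3) unfolding maximal_stable_def by auto
  then show ?thesis using that S(2) by blast
qed

lemma CIS_maximal_clique_not_dominated:
  assumes "simple_graph V E" "CIS V E" "maximal_clique V E C" "is_stable V E S0"
    and dominated: "\<forall>c\<in>C. \<exists>s\<in>S0. E c s"
  shows False
proof -
  obtain S where S: "maximal_stable V E S" "S0 \<subseteq> S"
    using ex_maximal_stable_superset[OF assms(1,4)] by blast
  then obtain c where c: "c \<in> C" "c \<in> S"
    using assms(2,3) unfolding CIS_def strong_clique_def by blast
  obtain s where "s \<in> S" "E c s" using dominated c(1) S(2) by blast
  then show False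
    using c(2) S(1) simple_graphD(4)[OF assms(1)] unfolding maximal_stable_def is_stable_def by blast
qed

lemma connected_graph_no_edge_leaving:
  assumes "connected_graph V E" "H \<subseteq> V" "x \<in> H"
    and closed: "\<And>u v. u \<in> H \<Longrightarrow> v \<in> V \<Longrightarrow> E u v \<Longrightarrow> v \<in> H"
  shows "V = H"
proof -
  have "v \<in> H" if "(x, v) \<in> {(u, v). u \<in> V \<and> v \<in> V \<and> E u v}\<^sup>*" for v
    using that by (induction rule: rtrancl_induct) (use assms(3) closed in auto)
  then show ?thesis using assms(1-3) unfolding connected_graph_def by blast
qed

lemma ex_fixpoint_free_permutation:
  assumes "finite A" "2 \<le> card A"
  obtains \<tau> where "bij_betw \<tau> A A" "\<forall>a\<in>A. \<tau> a \<noteq> a"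
proof -
  obtain cs where cs: "set cs = A" "distinct cs" using finite_distinct_list[OF assms(1)] by blast
  have len: "2 \<le> length cs" using cs assms(2) distinct_card by fastforce
  have "cycle_of_list cs a \<noteq> a" if a: "a \<in> A" for a
  proof -
    obtain i where i: "i < length cs" "cs ! i = a" using a cs(1) by (auto simp: in_set_conv_nth)
    have "map (cycle_of_list cs) cs = rotate1 cs" using cyclic_rotation[OF cs(2), of 1] by simp
    then have "cycle_of_list cs a = rotate1 cs ! i" using i by (metis nth_map)
    also have "\<dots> = cs ! (Suc i mod length cs)" using i(1) by (simp add: nth_rotate1)
    also have "\<dots> \<noteq> cs ! i"
    proof -
      have "Suc i mod length cs \<noteq> i" using i(1) len by (cases "Suc i = length cs") auto
      moreover have "Suc i mod length cs < length cs"
        using i(1) mod_less_divisor[of "length cs" "Suc i"] by linarith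
      ultimately show ?thesis using i(1) nth_eq_iff_index_eq[OF cs(2)] by blast
    qed
    finally show ?thesis using i(2) by simp
  qed
  then show ?thesis using that permutes_imp_bij[OF cycle_permutes] cs(1) by blast
qed

lemma ex_bij_betw_extending:
  assumes "finite A" "finite B" "card A = card B" "D \<subseteq> A" "inj_on f D" "f ` D \<subseteq> B"
  obtains g where "bij_betw g A B" "\<forall>a\<in>D. g a = f a"
proof -
  have "finite D" using assms(1,4) finite_subset by blast
  then have "card (A - D) = card (B - f ` D)"
    using card_Diff_subset[OF _ assms(4)] card_Diff_subset[OF _ assms(6)]
      card_image[OF assms(5)] assms(3) by simp
  then obtain k where k: "bij_betw k (A - D) (B - f ` D)"
    using bij_betw_iff_card assms(1,2) by (meson finite_Diff)
  define g where "g a = (if a \<in> D then f a else k a)" for a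
  have "bij_betw g D (f ` D)"
    using assms(5) unfolding g_def bij_betw_def inj_on_def by auto
  moreover have "bij_betw g (A - D) (B - f ` D)"
    using k bij_betw_cong[of "A - D" g k] g_def by auto
  ultimately have "bij_betw g (D \<union> (A - D)) (f ` D \<union> (B - f ` D))"
    by (rule bij_betw_combine) auto
  moreover have "D \<union> (A - D) = A" "f ` D \<union> (B - f ` D) = B" using assms(4,6) by auto
  ultimately show ?thesis using that g_def by auto
qed

lemma ex_bij_betw_avoiding_matching:
  assumes "finite A" "finite B" "card A = card B" "2 \<le> card A"
    and unique_right: "\<And>a b b'. a \<in> A \<Longrightarrow> b \<in> B \<Longrightarrow> b' \<in> B \<Longrightarrow> Q a b \<Longrightarrow> Q a b' \<Longrightarrow> b = b'"
    and unique_left: "\<And>a a' b. a \<in> A \<Longrightarrow> a' \<in> A \<Longrightarrow> b \<in> B \<Longrightarrow> Q a b \<Longrightarrow> Q a' b \<Longrightarrow> a = a'"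
  obtains \<pi> where "bij_betw \<pi> A B" "\<forall>a\<in>A. \<not> Q a (\<pi> a)"
proof -
  define D where "D = {a\<in>A. \<exists>b\<in>B. Q a b}"
  define f where "f a = (SOME b. b \<in> B \<and> Q a b)" for a
  have f: "f a \<in> B \<and> Q a (f a)" if "a \<in> D" for a
    using that someI_ex[of "\<lambda>b. b \<in> B \<and> Q a b"] unfolding D_def f_def by blast
  have "inj_on f D"
    using f unique_left unfolding D_def inj_on_def by (metis (no_types, lifting) mem_Collect_eq)
  moreover have "D \<subseteq> A" "f ` D \<subseteq> B" using f unfolding D_def by auto
  ultimately obtain g where g: "bij_betw g A B" "\<forall>a\<in>D. g a = f a"
    using ex_bij_betw_extending[OF assms(1-3)] by blast
  have Q_imp_g: "b = g a" if "a \<in> A" "b \<in> B" "Q a b" for a b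
  proof -
    have "a \<in> D" using that unfolding D_def by blast
    then show ?thesis using f g(2) unique_right that by metis
  qed
  obtain \<tau> where \<tau>: "bij_betw \<tau> A A" "\<forall>a\<in>A. \<tau> a \<noteq> a"
    using ex_fixpoint_free_permutation[OF assms(1,4)] by blast
  have "\<not> Q a (g (\<tau> a))" if "a \<in> A" for a
  proof
    assume "Q a (g (\<tau> a))"
    moreover have "\<tau> a \<in> A" using \<tau>(1) that bij_betwE by blast
    ultimately have "g (\<tau> a) = g a" using Q_imp_g that g(1) bij_betwE by blast
    then have "\<tau> a = a" using g(1) \<open>\<tau> a \<in> A\<close> that unfolding bij_betw_def inj_on_def by blast
    then show False using \<tau>(2) that by blast
  qed
  then show ?thesis using that bij_betw_trans[OF \<tau>(1) g(1)] by auto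
qed

locale induced_rook_graph =
  fixes V :: "'a set" and E :: "'a \<Rightarrow> 'a \<Rightarrow> bool" and N :: "'i set" and h :: "'i \<Rightarrow> 'i \<Rightarrow> 'a"
  assumes graph: "simple_graph V E"
    and cell_inj: "inj_on (\<lambda>(i, j). h i j) (N \<times> N)"
    and cell_in_V: "\<And>i j. i \<in> N \<Longrightarrow> j \<in> N \<Longrightarrow> h i j \<in> V"
    and cell_adj: "\<And>i j k l. i \<in> N \<Longrightarrow> j \<in> N \<Longrightarrow> k \<in> N \<Longrightarrow> l \<in> N \<Longrightarrow> (i, j) \<noteq> (k, l) \<Longrightarrow>
      E (h i j) (h k l) \<longleftrightarrow> i = k \<or> j = l"
begin

lemma transpose: "induced_rook_graph V E N (\<lambda>i j. h j i)"
proof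
  show "inj_on (\<lambda>(i, j). h j i) (N \<times> N)"
    using cell_inj by (auto simp: inj_on_def)
qed (use graph cell_in_V cell_adj in auto)

lemma cell_eq_iff:
  assumes "i \<in> N" "j \<in> N" "k \<in> N" "l \<in> N"
  shows "h i j = h k l \<longleftrightarrow> i = k \<and> j = l"
  using inj_onD[OF cell_inj, of "(i, j)" "(k, l)"] assms by auto

lemma row_is_clique: "i \<in> N \<Longrightarrow> is_clique V E {h i j | j. j \<in> N}"
  unfolding is_clique_def using cell_in_V by (fastforce intro: cell_adj[THEN iffD2])

lemma complete_to_row_nonadjacent:
  assumes "diamond_free V E" "2 \<le> card N"
    and "i \<in> N" "\<forall>c\<in>N. E x (h i c)" "r \<in> N" "r \<noteq> i" "c \<in> N"
  shows "\<not> E x (h r c)"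
proof
  assume "E x (h r c)"
  have "finite N" using assms(2) by (metis card.infinite not_numeral_le_zero)
  moreover have "\<not> card N \<le> Suc 0" using assms(2) by simp
  ultimately have "\<exists>m\<in>N. m \<noteq> c" using card_le_Suc0_iff_eq by metis
  then obtain m where m: "m \<in> N" "m \<noteq> c" by blast
  have "x \<noteq> h r c"
    using assms(3-7) m cell_adj[of r c i m] by auto
  show False
  proof (rule diamond_freeD[OF assms(1) graph])
    show "E x (h i c)" "E x (h i m)" "E (h i c) (h i m)" "E (h i c) (h r c)"
      using assms(3-7) m cell_adj by auto
    show "\<not> E (h i m) (h r c)" "h i m \<noteq> h r c"
      using assms(3,5-7) m cell_adj[of i m r c] cell_eq_iff by auto
  qed fact
qed

lemma transversal_dominates_column:
  assumes "CIS V E" "k \<in> N" "l \<in> N" and \<pi>: "bij_betw \<pi> (N - {k}) (N - {l})"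
    and "z \<in> V" "E z (h k l)" "\<forall>r\<in>N - {k}. \<not> E z (h r (\<pi> r))"
  shows "\<not> maximal_clique V E {h r l | r. r \<in> N}"
proof
  assume max: "maximal_clique V E {h r l | r. r \<in> N}"
  have \<pi>_in: "\<pi> r \<in> N - {l}" if "r \<in> N - {k}" for r using \<pi> that bij_betwE by blast
  have \<pi>_inj: "\<pi> r \<noteq> \<pi> s" if "r \<in> N - {k}" "s \<in> N - {k}" "r \<noteq> s" for r s
    using \<pi> that unfolding bij_betw_def inj_on_def by blast
  define S where "S = insert z ((\<lambda>r. h r (\<pi> r)) ` (N - {k}))"
  have transversal_stable: "\<not> E (h r (\<pi> r)) (h s (\<pi> s))" if "r \<in> N - {k}" "s \<in> N - {k}" for r s
  proof (cases "r = s")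
    case False
    then show ?thesis using that \<pi>_in \<pi>_inj cell_adj by auto
  qed (use simple_graphD(4)[OF graph] in blast)
  have z_nonadj: "\<not> E z (h r (\<pi> r))" "\<not> E (h r (\<pi> r)) z" if "r \<in> N - {k}" for r
    using assms(7) that simple_graphD(3)[OF graph] by blast+
  have "is_stable V E S"
    unfolding is_stable_def S_def
    using assms(5) \<pi>_in cell_in_V transversal_stable z_nonadj by auto
  moreover have "\<forall>c\<in>{h r l | r. r \<in> N}. \<exists>s\<in>S. E c s"
  proof
    fix c assume "c \<in> {h r l | r. r \<in> N}"
    then obtain r where r: "r \<in> N" "c = h r l" by blast
    show "\<exists>s\<in>S. E c s"
    proof (cases "r = k")
      case True
      then show ?thesis using r assms(6) simple_graphD(3)[OF graph] by (auto simp: S_def)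
    next
      case False
      then have "\<pi> r \<in> N - {l}" using r(1) \<pi>_in by blast
      then have "E (h r l) (h r (\<pi> r))" using r(1) assms(3) cell_adj by auto
      then show ?thesis using r False by (auto simp: S_def)
    qed
  qed
  ultimately show False using CIS_maximal_clique_not_dominated[OF graph assms(1) max] by blast
qed

lemma row_not_maximal_imp_column_not_maximal:
  assumes "diamond_free V E" "CIS V E" "2 \<le> card N" "i \<in> N" "j \<in> N"
    and "\<not> maximal_clique V E {h i c | c. c \<in> N}"
  shows "\<not> maximal_clique V E {h r j | r. r \<in> N}"
proof -
  obtain x where x: "x \<in> V" "\<forall>c\<in>{h i c | c. c \<in> N}. E x c"
    by (rule not_maximal_clique_ex_complete_vertex[OF row_is_clique[OF assms(4)] assms(6)])
  then have x_row: "\<forall>c\<in>N. E x (h i c)" by blast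
  have "finite N" using assms(3) by (metis card.infinite not_numeral_le_zero)
  moreover have "card (N - {i}) = card (N - {j})" using assms(4,5) by simp
  ultimately obtain \<pi> where \<pi>: "bij_betw \<pi> (N - {i}) (N - {j})"
    using bij_betw_iff_card[of "N - {i}" "N - {j}"] by blast
  have "\<not> E x (h r (\<pi> r))" if "r \<in> N - {i}" for r
  proof -
    have "\<pi> r \<in> N" using \<pi> that bij_betwE by blast
    then show ?thesis using complete_to_row_nonadjacent[OF assms(1,3,4) x_row] that by blast
  qed
  moreover have "E x (h i j)" using x_row assms(5) by blast
  ultimately show ?thesis
    using transversal_dominates_column[OF assms(2,4,5) \<pi> x(1)] by blast
qed

lemma column_not_maximal_imp_row_not_maximal:
  assumes "diamond_free V E" "CIS V E" "2 \<le> card N" "i \<in> N" "j \<in> N"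
    and "\<not> maximal_clique V E {h r j | r. r \<in> N}"
  shows "\<not> maximal_clique V E {h i c | c. c \<in> N}"
  by (rule induced_rook_graph.row_not_maximal_imp_column_not_maximal[OF transpose assms(1-3,5,4,6)])

lemma lines_maximal_imp_no_outside_neighbour:
  assumes "diamond_free V E" "CIS V E" "3 \<le> card N"
    and rows: "\<forall>i\<in>N. maximal_clique V E {h i c | c. c \<in> N}"
    and columns: "\<forall>j\<in>N. maximal_clique V E {h r j | r. r \<in> N}"
    and "y \<in> V" "y \<notin> {h i j | i j. i \<in> N \<and> j \<in> N}" "k \<in> N" "l \<in> N"
  shows "\<not> E y (h k l)"
proof
  assume "E y (h k l)"
  have "finite N" using assms(3) by (metis card.infinite not_numeral_le_zero)
  have row_unique: "c = c'"
    if "r \<in> N - {k}" "c \<in> N - {l}" "c' \<in> N - {l}" "E y (h r c)" "E y (h r c')" for r c c'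
  proof -
    have "r \<in> N" "c \<in> N" "c' \<in> N" using that(1-3) by auto
    have "h r c = h r c'"
    proof (rule diamond_free_maximal_clique_unique_neighbour[OF graph assms(1)])
      show "maximal_clique V E {h r c | c. c \<in> N}" using rows \<open>r \<in> N\<close> by blast
    qed (use that(4,5) assms(6,7) \<open>r \<in> N\<close> \<open>c \<in> N\<close> \<open>c' \<in> N\<close> in auto)
    then show ?thesis using cell_eq_iff \<open>r \<in> N\<close> \<open>c \<in> N\<close> \<open>c' \<in> N\<close> by blast
  qed
  have column_unique: "r = r'"
    if "r \<in> N - {k}" "r' \<in> N - {k}" "c \<in> N - {l}" "E y (h r c)" "E y (h r' c)" for r r' c
  proof -
    have "r \<in> N" "r' \<in> N" "c \<in> N" using that(1-3) by auto
    have "h r c = h r' c"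
    proof (rule diamond_free_maximal_clique_unique_neighbour[OF graph assms(1)])
      show "maximal_clique V E {h r c | r. r \<in> N}" using columns \<open>c \<in> N\<close> by blast
    qed (use that(4,5) assms(6,7) \<open>r \<in> N\<close> \<open>r' \<in> N\<close> \<open>c \<in> N\<close> in auto)
    then show ?thesis using cell_eq_iff \<open>r \<in> N\<close> \<open>r' \<in> N\<close> \<open>c \<in> N\<close> by blast
  qed
  have sizes: "finite (N - {k})" "finite (N - {l})" "card (N - {k}) = card (N - {l})"
      "2 \<le> card (N - {k})"
    using \<open>finite N\<close> assms(3,8,9) by auto
  obtain \<pi> where \<pi>: "bij_betw \<pi> (N - {k}) (N - {l})" "\<forall>r\<in>N - {k}. \<not> E y (h r (\<pi> r))"
    by (rule ex_bij_betw_avoiding_matching[OF sizes row_unique column_unique])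
  show False
    using transversal_dominates_column[OF assms(2,8,9) \<pi>(1) assms(6) \<open>E y (h k l)\<close> \<pi>(2)]
      columns[rule_format, OF assms(9)] by contradiction
qed

end

theorem lemma6:
  fixes V :: "'a set" and E :: "'a \<Rightarrow> 'a \<Rightarrow> bool" and n :: nat and h :: "nat \<Rightarrow> nat \<Rightarrow> 'a"
  assumes "simple_graph V E" and "connected_graph V E" and "diamond_free V E" and "CIS V E"
    and "n \<ge> 3"
    and "inj_on (\<lambda>(i, j). h i j) ({1..n} \<times> {1..n})"
    and "\<forall>i\<in>{1..n}. \<forall>j\<in>{1..n}. h i j \<in> V"
    and "\<forall>i\<in>{1..n}. \<forall>j\<in>{1..n}. \<forall>k\<in>{1..n}. \<forall>l\<in>{1..n}.
           (i, j) \<noteq> (k, l) \<longrightarrow> (E (h i j) (h k l) \<longleftrightarrow> i = k \<or> j = l)"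
  shows "(((\<forall>i\<in>{1..n}. maximal_clique V E {h i j | j. j \<in> {1..n}})
           \<and> (\<forall>j\<in>{1..n}. maximal_clique V E {h i j | i. i \<in> {1..n}}))
       \<or> ((\<forall>i\<in>{1..n}. \<not> maximal_clique V E {h i j | j. j \<in> {1..n}})
           \<and> (\<forall>j\<in>{1..n}. \<not> maximal_clique V E {h i j | i. i \<in> {1..n}}))) \<and>
       ((\<forall>i\<in>{1..n}. maximal_clique V E {h i j | j. j \<in> {1..n}})
           \<and> (\<forall>j\<in>{1..n}. maximal_clique V E {h i j | i. i \<in> {1..n}})
         \<longrightarrow> V = {h i j | i j. i \<in> {1..n} \<and> j \<in> {1..n}})"
proof -
  let ?N = "{1..n}"
  interpret induced_rook_graph V E ?N h
    by unfold_locales (use assms(1,6-8) in \<open>blast+\<close>)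
  have card: "3 \<le> card ?N" "2 \<le> card ?N" and one: "1 \<in> ?N" using assms(5) by auto
  let ?rows = "\<forall>i\<in>?N. maximal_clique V E {h i j | j. j \<in> ?N}"
  let ?cols = "\<forall>j\<in>?N. maximal_clique V E {h i j | i. i \<in> ?N}"
  note row_to_column = row_not_maximal_imp_column_not_maximal[OF assms(3,4) card(2)]
  note column_to_row = column_not_maximal_imp_row_not_maximal[OF assms(3,4) card(2)]
  have "\<not> ?rows \<or> \<not> ?cols \<Longrightarrow> \<not> maximal_clique V E {h i 1 | i. i \<in> ?N}"
    using row_to_column column_to_row one by blast
  then have "(?rows \<and> ?cols) \<or> ((\<forall>i\<in>?N. \<not> maximal_clique V E {h i j | j. j \<in> ?N})
      \<and> (\<forall>j\<in>?N. \<not> maximal_clique V E {h i j | i. i \<in> ?N}))"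
    using row_to_column column_to_row one by blast
  moreover have "V = {h i j | i j. i \<in> ?N \<and> j \<in> ?N}" if ?rows ?cols
  proof (rule connected_graph_no_edge_leaving[OF assms(2)])
    show "{h i j | i j. i \<in> ?N \<and> j \<in> ?N} \<subseteq> V" "h 1 1 \<in> {h i j | i j. i \<in> ?N \<and> j \<in> ?N}"
      using cell_in_V one by auto
    fix u v assume "u \<in> {h i j | i j. i \<in> ?N \<and> j \<in> ?N}" "v \<in> V" "E u v"
    then show "v \<in> {h i j | i j. i \<in> ?N \<and> j \<in> ?N}"
      using lines_maximal_imp_no_outside_neighbour[OF assms(3,4) card(1) that]
        simple_graphD(3)[OF assms(1)] by blast
  qed
  ultimately show ?thesis by blast
qed

end
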